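(* Assume $k_{+\infty}=k_{-\infty}$, that $k^2(x)>0$ for all $x$ (no classically forbidden region), and that $k=\sqrt{k^2}$ is twice continuously differentiable. Then $$T\ \ge\ \mathrm{sech}^2\left\{\frac12\int_{-\infty}^{\infty}\left|\frac{1}{\sqrt{k}}\left(\frac{1}{\sqrt{k}}\right)''\right|\mathrm{d}x\right\}.$$
   Context: Standing setup: $k^2:\mathbb{R}\to\mathbb{R}$ is a function with $k^2(x)\to k_{\pm\infty}^2$ as $x\to\pm\infty$, where $k_{\pm\infty}>0$ and $k^2-k_{\pm\infty}^2$ is integrable near $\pm\infty$. For the equation $u''+k^2(x)u=0$ there is a solution with $u(x)=e^{ik_{-\infty}x}+r\,e^{-ik_{-\infty}x}+o(1)$ as $x\to-\infty$ and $u(x)=\tau\,e^{ik_{+\infty}x}+o(1)$ as $x\to+\infty$; the transmission probability is $T=(k_{+\infty}/k_{-\infty})|\tau|^2$. Here $\mathrm{sech}=1/\cosh$, and if the integral equals $+\infty$ the bound is read as the trivial statement $T\ge 0$. *)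

theory Defs
  imports "HOL-Analysis.Analysis"
begin

definition sech :: "real \<Rightarrow> real" where
  "sech x = 1 / cosh x"

definition transmission :: "real \<Rightarrow> real \<Rightarrow> complex \<Rightarrow> real" where
  "transmission kp km \<tau> = (kp / km) * (cmod \<tau>)^2"

end

theory Submission
  imports Defs
begin

(* Write k = sqrt q and w = 1 / sqrt k.  The Liouville transformation p = u / w,
   P = w u' - w' u turns u'' + q u = 0 into the first-order system p' = k P,
   P' = -(k + V) p with V = w w''.  Along this system the flux 4 Im (conj p * P) is
   conserved, the energy 2 (|p|^2 + |P|^2) changes only through V, and the gap function
   energy + sqrt (energy^2 - flux^2) changes at relative rate at most |V|.  By Gronwall,
   its values at -\<infinity> and +\<infinity> differ at most by the factor exp (\<integral>|V|).  Evaluating energy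
   and flux at both ends through the asymptotics of u gives |\<tau>|^2 = 1 - |r|^2 and
   1 + |r| \<le> (1 - |r|) exp (\<integral>|V|), which is equivalent to T \<ge> sech^2 (\<integral>|V| / 2). *)

(* A function whose derivative is integrable on a right half-line has a limit at +\<infinity>:
   up to a constant it is the partial integral of its derivative. *)
lemma tendsto_at_top_of_integrable_derivative:
  fixes G G' :: "real \<Rightarrow> 'a::euclidean_space"
  assumes deriv: "\<And>x. (G has_vector_derivative G' x) (at x)"
    and integrable: "set_integrable lborel {b..} G'"
  shows "\<exists>L. (G \<longlongrightarrow> L) at_top"
proof -
  have G_eq: "G x = G b + (LINT t:{b..x}|lborel. G' t)" if "b \<le> x" for x
  proof -
    have "(G' has_integral (G x - G b)) {b..x}"
      using that deriv
      by (intro fundamental_theorem_of_calculus) (auto intro: has_vector_derivative_at_within)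
    moreover have "set_integrable lborel {b..x} G'"
      by (rule set_integrable_subset[OF integrable]) auto
    ultimately have "(LINT t:{b..x}|lborel. G' t) = G x - G b"
      using set_borel_integral_eq_integral(2) integral_unique by metis
    then show ?thesis by simp
  qed
  have "((\<lambda>x. G b + (LINT t:{b..x}|lborel. G' t)) \<longlongrightarrow> G b + (LINT t:{b..}|lborel. G' t)) at_top"
    by (intro tendsto_add tendsto_const tendsto_set_lebesgue_integral_at_top[OF _ integrable]) simp
  moreover have "eventually (\<lambda>x. G b + (LINT t:{b..x}|lborel. G' t) = G x) at_top"
    using eventually_ge_at_top[of b] by (rule eventually_mono) (rule G_eq[symmetric])
  ultimately show ?thesis
    by (blast intro: Lim_transform_eventually)
qed

lemma tendsto_at_bot_of_integrable_derivative:
  fixes G G' :: "real \<Rightarrow> 'a::euclidean_space"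
  assumes deriv: "\<And>x. (G has_vector_derivative G' x) (at x)"
    and integrable: "set_integrable lborel {..a} G'"
  shows "\<exists>L. (G \<longlongrightarrow> L) at_bot"
proof -
  have mirror_deriv: "((\<lambda>x. G (-x)) has_vector_derivative - G' (-x)) (at x)" for x
  proof -
    have "((G \<circ> uminus) has_vector_derivative (-1) *\<^sub>R G' (-x)) (at x)"
      by (rule vector_diff_chain_at) (auto intro!: derivative_eq_intros deriv)
    then show ?thesis by (simp add: o_def)
  qed
  have "integrable lborel (\<lambda>x. indicator {..a} (0 + (-1) * x) *\<^sub>R G' (0 + (-1) * x))"
    using integrable unfolding set_integrable_def
    by (subst lborel_integrable_real_affine_iff) auto
  then have "integrable lborel (\<lambda>x. - (indicator {-a..} x *\<^sub>R - G' (-x)))"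
    by (simp add: indicator_def minus_le_iff)
  then have "set_integrable lborel {-a..} (\<lambda>x. - G' (-x))"
    unfolding set_integrable_def using integrable_minus by fastforce
  then obtain L where "((\<lambda>x. G (-x)) \<longlongrightarrow> L) at_top"
    using tendsto_at_top_of_integrable_derivative[OF mirror_deriv] by blast
  then show ?thesis
    using filterlim_at_bot_mirror by blast
qed

(* The plane waves exp (\<i>\<theta>x) and exp (-\<i>\<theta>x) are asymptotically independent: a combination
   tending to zero has zero coefficients (sample along the points x = (c + 2\<pi>n)/\<theta>). *)
lemma exp_combination_tendsto_zero_at_top:
  fixes A B :: complex and \<theta> :: real
  assumes "\<theta> > 0"
    and lim: "((\<lambda>x. A * exp (\<i> * of_real (\<theta> * x)) + B * exp (- \<i> * of_real (\<theta> * x))) \<longlongrightarrow> 0) at_top"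
  shows "A = 0 \<and> B = 0"
proof -
  have phase: "A * cis c + B * cis (- c) = 0" for c
  proof -
    define X where "X = (\<lambda>n::nat. c / \<theta> + (2 * pi / \<theta>) * real n)"
    have "filterlim X at_top sequentially"
      unfolding X_def using \<open>\<theta> > 0\<close>
      by (intro filterlim_tendsto_add_at_top[OF tendsto_const]
          filterlim_tendsto_pos_mult_at_top[OF tendsto_const _ filterlim_real_sequentially]) auto
    then have "(\<lambda>n. A * cis (\<theta> * X n) + B * cis (- (\<theta> * X n))) \<longlonglongrightarrow> 0"
      using filterlim_compose[OF lim] by (simp add: cis_conv_exp)
    moreover have "\<theta> * X n = c + 2 * pi * real n" for n
      using \<open>\<theta> > 0\<close> by (simp add: X_def field_simps)
    moreover have periodic: "cis (a + 2 * pi * m) = cis a" if "m \<in> \<int>" for a m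
      using cis_mult[of a "2 * pi * m"] cis_multiple_2pi[OF that] by simp
    moreover have "cis (- (c + 2 * pi * real n)) = cis (- c)" for n
      using periodic[of "- real n" "- c"] by simp
    ultimately show ?thesis
      by (simp add: LIMSEQ_const_iff)
  qed
  have "A + B = 0" "\<i> * (A - B) = 0"
    using phase[of 0] phase[of "pi / 2"] by (simp_all add: algebra_simps)
  then show ?thesis by auto
qed

lemma exp_combination_tendsto_zero_at_bot:
  fixes A B :: complex and \<theta> :: real
  assumes "\<theta> > 0"
    and lim: "((\<lambda>x. A * exp (\<i> * of_real (\<theta> * x)) + B * exp (- \<i> * of_real (\<theta> * x))) \<longlongrightarrow> 0) at_bot"
  shows "A = 0 \<and> B = 0"
proof -
  have "((\<lambda>x. B * exp (\<i> * of_real (\<theta> * x)) + A * exp (- \<i> * of_real (\<theta> * x))) \<longlongrightarrow> 0) at_top"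
    using filterlim_at_bot_mirror[THEN iffD1, OF lim] by (simp add: add.commute)
  then show ?thesis
    using exp_combination_tendsto_zero_at_top[OF \<open>\<theta> > 0\<close>] by blast
qed

lemma has_real_derivative_norm_square:
  fixes f :: "real \<Rightarrow> complex"
  assumes "(f has_vector_derivative f') (at x)"
  shows "((\<lambda>x. (cmod (f x))\<^sup>2) has_real_derivative 2 * Re (cnj (f x) * f')) (at x)"
proof -
  have "((\<lambda>x. f x * cnj (f x)) has_vector_derivative f x * cnj f' + f' * cnj (f x)) (at x)"
    by (intro has_vector_derivative_mult has_vector_derivative_cnj assms)
  then have "((\<lambda>x. Re (f x * cnj (f x))) has_vector_derivative Re (f x * cnj f' + f' * cnj (f x))) (at x)"
    by (rule bounded_linear.has_vector_derivative[OF bounded_linear_Re])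
  moreover have "Re (z * cnj z) = (cmod z)\<^sup>2" for z
    by (metis Re_complex_of_real complex_norm_square)
  ultimately show ?thesis
    by (simp add: has_real_derivative_iff_has_vector_derivative mult.commute)
qed

lemma bounded_antiderivative:
  fixes v :: "real \<Rightarrow> real"
  assumes cont: "continuous_on UNIV v" and nonneg: "\<And>x. v x \<ge> 0"
    and "0 \<le> I" and total: "(\<integral>\<^sup>+ x. ennreal (v x) \<partial>lborel) \<le> ennreal I"
  obtains F where "\<And>x. (F has_real_derivative v x) (at x)"
    and "\<And>x y. x \<le> y \<Longrightarrow> F y - F x \<le> I"
proof -
  obtain F where F: "\<And>x. (F has_vector_derivative v x) (at x)"
    using einterval_antiderivative[of "-\<infinity>" "\<infinity>" v] cont
    by (auto simp: continuous_on_eq_continuous_at)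
  have increment: "F y - F x \<le> I" if "x \<le> y" for x y
  proof -
    have "(v has_integral (F y - F x)) {x..y}"
      using that F by (intro fundamental_theorem_of_calculus) (auto intro: has_vector_derivative_at_within)
    then have "ennreal (F y - F x) = (\<integral>\<^sup>+ t. indicator {x..y} t * v t \<partial>lborel)"
      using nonneg by (intro nn_integral_has_integral_lebesgue[symmetric]) auto
    also have "\<dots> \<le> (\<integral>\<^sup>+ t. ennreal (v t) \<partial>lborel)"
      by (intro nn_integral_mono) (auto simp: indicator_def)
    finally have "ennreal (F y - F x) \<le> ennreal I"
      using total by (rule order_trans)
    then show ?thesis
      using \<open>0 \<le> I\<close> by simp
  qed
  show ?thesis
  proof (rule that)
    show "(F has_real_derivative v x) (at x)" for x
      using F[of x] by (simp add: has_real_derivative_iff_has_vector_derivative)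
  qed (fact increment)
qed

lemma integrating_factor_mono:
  fixes f f' h F :: "real \<Rightarrow> real"
  assumes f_deriv: "\<And>t. (f has_real_derivative f' t) (at t)"
    and F_deriv: "\<And>t. (F has_real_derivative h t) (at t)"
    and growth: "\<And>t. f' t + h t * f t \<ge> 0" and "x \<le> y"
  shows "f x * exp (F x) \<le> f y * exp (F y)"
proof (rule DERIV_nonneg_imp_nondecreasing[OF \<open>x \<le> y\<close>])
  fix t
  have "((\<lambda>t. f t * exp (F t)) has_real_derivative f' t * exp (F t) + f t * (exp (F t) * h t)) (at t)"
    by (rule derivative_eq_intros f_deriv F_deriv)+ auto
  moreover have "f' t * exp (F t) + f t * (exp (F t) * h t) = (f' t + h t * f t) * exp (F t)"
    by (simp add: algebra_simps)
  ultimately show "\<exists>d. ((\<lambda>t. f t * exp (F t)) has_real_derivative d) (at t) \<and> 0 \<le> d"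
    using growth[of t] by auto
qed

lemma gronwall_two_sided:
  fixes f v F :: "real \<Rightarrow> real"
  assumes rate: "\<And>t. \<exists>d. (f has_real_derivative d) (at t) \<and> \<bar>d\<bar> \<le> v t * f t"
    and F_deriv: "\<And>t. (F has_real_derivative v t) (at t)"
    and nonneg: "\<And>t. f t \<ge> 0"
    and "x \<le> y" and increment: "F y - F x \<le> I"
  shows "f x \<le> f y * exp I" and "f y \<le> f x * exp I"
proof -
  obtain f' where f_deriv: "\<And>t. (f has_real_derivative f' t) (at t)"
    and f'_bound: "\<And>t. \<bar>f' t\<bar> \<le> v t * f t"
    using rate by metis
  have "f x * exp (F x) \<le> f y * exp (F y)"
  proof (rule integrating_factor_mono[OF f_deriv F_deriv _ \<open>x \<le> y\<close>])
    show "f' t + v t * f t \<ge> 0" for t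
      using f'_bound[of t] by (simp add: abs_le_iff)
  qed
  then have "f x \<le> f y * exp (F y - F x)"
    by (simp add: exp_diff field_simps)
  also have "\<dots> \<le> f y * exp I"
    using increment nonneg[of y] by (intro mult_left_mono) auto
  finally show "f x \<le> f y * exp I" .
  have "(- f x) * exp (- F x) \<le> (- f y) * exp (- F y)"
  proof (rule integrating_factor_mono[OF _ _ _ \<open>x \<le> y\<close>])
    show "((\<lambda>t. - f t) has_real_derivative - f' t) (at t)" for t
      by (intro derivative_intros f_deriv)
    show "((\<lambda>t. - F t) has_real_derivative - v t) (at t)" for t
      by (intro derivative_intros F_deriv)
    show "- f' t + - v t * - f t \<ge> 0" for t
      using f'_bound[of t] by (simp add: abs_le_iff)
  qed
  then have "f y \<le> f x * exp (F y - F x)"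
    by (simp add: exp_diff exp_minus field_simps)
  also have "\<dots> \<le> f x * exp I"
    using increment nonneg[of x] by (intro mult_left_mono) auto
  finally show "f y \<le> f x * exp I" .
qed

lemma tendsto_scaled_asymptotic:
  fixes f g :: "real \<Rightarrow> complex" and c :: "real \<Rightarrow> real"
  assumes close: "((\<lambda>x. f x - g x) \<longlongrightarrow> 0) F" and scale: "(c \<longlongrightarrow> s) F"
    and bounded: "\<And>x. cmod (g x) \<le> M"
  shows "((\<lambda>x. of_real (c x) * f x - of_real s * g x) \<longlongrightarrow> 0) F"
proof -
  have "((\<lambda>x. of_real (c x) * (f x - g x)) \<longlongrightarrow> of_real s * 0) F"
    by (intro tendsto_mult tendsto_of_real scale close)
  moreover have "((\<lambda>x. of_real (c x - s) * g x) \<longlongrightarrow> 0) F"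
  proof (rule tendsto_0_le)
    show "((\<lambda>x. c x - s) \<longlongrightarrow> 0) F"
      using tendsto_diff[OF scale tendsto_const[of s]] by simp
    show "eventually (\<lambda>x. norm (of_real (c x - s) * g x) \<le> norm (c x - s) * M) F"
      using bounded by (intro always_eventually allI) (simp add: norm_mult mult_left_mono del: of_real_diff)
  qed
  ultimately have "((\<lambda>x. of_real (c x) * (f x - g x) + of_real (c x - s) * g x) \<longlongrightarrow> 0) F"
    using tendsto_add by fastforce
  then show ?thesis
    by (simp add: algebra_simps)
qed

lemma limit_at_bot_le_limit_at_top:
  fixes f :: "real \<Rightarrow> real"
  assumes bot: "(f \<longlongrightarrow> a) at_bot" and top: "(f \<longlongrightarrow> b) at_top"
    and growth: "\<And>x y. x \<le> y \<Longrightarrow> f x \<le> f y * c"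
  shows "a \<le> b * c"
proof -
  have "f x \<le> b * c" for x
    by (rule tendsto_le[OF trivial_limit_at_top_linorder tendsto_mult[OF top tendsto_const] tendsto_const])
       (use growth in \<open>auto intro: eventually_mono[OF eventually_ge_at_top[of x]]\<close>)
  then show ?thesis
    by (intro tendsto_le[OF trivial_limit_at_bot_linorder tendsto_const bot]) auto
qed

lemma set_integrable_continuous_bound:
  fixes g :: "real \<Rightarrow> 'a::{banach, second_countable_topology}" and h :: "real \<Rightarrow> real"
  assumes "set_integrable lborel A h" and "A \<in> sets lborel" and "continuous_on UNIV g"
    and "\<And>x. norm (g x) \<le> h x"
  shows "set_integrable lborel A g"
proof (rule set_integrable_bound[OF assms(1)])
  show "set_borel_measurable lborel A g"
    unfolding set_borel_measurable_def using assms(2) borel_measurable_continuous_onI[OF assms(3)]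
    by (intro borel_measurable_scaleR borel_measurable_indicator) auto
  show "AE x in lborel. x \<in> A \<longrightarrow> norm (g x) \<le> norm (h x)"
    using assms(4) by (auto intro: order.trans[OF _ abs_ge_self])
qed

lemma has_vector_derivative_exp_linear:
  fixes c :: complex and \<theta> :: real
  shows "((\<lambda>x. exp (c * of_real (\<theta> * x))) has_vector_derivative c * of_real \<theta> * exp (c * of_real (\<theta> * x))) (at x)"
proof -
  have "((\<lambda>z. exp (c * of_real \<theta> * z)) has_field_derivative exp (c * of_real \<theta> * of_real x) * (c * of_real \<theta>))
      (at (of_real x))"
    by (auto intro!: derivative_eq_intros)
  from has_vector_derivative_real_field[OF this] show ?thesis
    by (simp add: mult_ac)
qed

(* Integrability of q - \<kappa>\<^sup>2 implies integrability of sqrt q - \<kappa>, because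
   |sqrt q - \<kappa>| \<le> |q - \<kappa>\<^sup>2| / \<kappa> when q > 0. *)
lemma set_integrable_sqrt_deviation:
  fixes q :: "real \<Rightarrow> real"
  assumes pos: "\<And>x. q x > 0" and "\<kappa> > 0"
    and cont: "continuous_on UNIV (\<lambda>x. sqrt (q x))"
    and integrable: "set_integrable lborel A (\<lambda>x. q x - \<kappa>\<^sup>2)" and "A \<in> sets lborel"
  shows "set_integrable lborel A (\<lambda>x. sqrt (q x) - \<kappa>)"
proof (rule set_integrable_continuous_bound)
  show "set_integrable lborel A (\<lambda>x. \<bar>q x - \<kappa>\<^sup>2\<bar> / \<kappa>)"
    using integrable by (intro set_integrable_divide set_integrable_abs)
  show "continuous_on UNIV (\<lambda>x. sqrt (q x) - \<kappa>)"
    by (intro continuous_intros cont)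
  show "norm (sqrt (q x) - \<kappa>) \<le> \<bar>q x - \<kappa>\<^sup>2\<bar> / \<kappa>" for x
  proof -
    have root_nonneg: "sqrt (q x) \<ge> 0"
      using pos[of x] by simp
    have "q x - \<kappa>\<^sup>2 = (sqrt (q x) - \<kappa>) * (sqrt (q x) + \<kappa>)"
      using pos[of x] by (simp add: algebra_simps power2_eq_square)
    moreover have "\<bar>sqrt (q x) + \<kappa>\<bar> = sqrt (q x) + \<kappa>"
      using \<open>\<kappa> > 0\<close> root_nonneg by linarith
    ultimately have "\<bar>q x - \<kappa>\<^sup>2\<bar> = \<bar>sqrt (q x) - \<kappa>\<bar> * (sqrt (q x) + \<kappa>)"
      by (simp add: abs_mult)
    moreover have "\<bar>sqrt (q x) - \<kappa>\<bar> * \<kappa> \<le> \<bar>sqrt (q x) - \<kappa>\<bar> * (sqrt (q x) + \<kappa>)"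
      using root_nonneg by (intro mult_left_mono) simp_all
    ultimately show ?thesis
      using \<open>\<kappa> > 0\<close> by (simp add: pos_le_divide_eq)
  qed
qed (fact \<open>A \<in> sets lborel\<close>)

(* The final algebra: 1 + \<rho> \<le> (1 - \<rho>) exp I means \<rho> \<le> tanh (I/2), hence
   1 - \<rho>\<^sup>2 \<ge> 1 - tanh\<^sup>2 (I/2) = sech\<^sup>2 (I/2). *)
lemma sech_square_lower_bound:
  fixes \<rho> I :: real
  assumes "\<rho> \<ge> 0" and ratio: "1 + \<rho> \<le> (1 - \<rho>) * exp I"
  shows "(sech (I / 2))\<^sup>2 \<le> 1 - \<rho>\<^sup>2"
proof -
  define c where "c = exp (I / 2)"
  define t where "t = (c\<^sup>2 - 1) / (c\<^sup>2 + 1)"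
  have c_pos: "c > 0" by (simp add: c_def)
  have den: "c\<^sup>2 + 1 \<noteq> 0"
    using zero_le_power2[of c] by linarith
  have exp_I: "exp I = c\<^sup>2"
    by (simp add: c_def power2_eq_square exp_add[symmetric])
  have "(sech (I / 2))\<^sup>2 = 4 * c\<^sup>2 / (c\<^sup>2 + 1)\<^sup>2"
    using c_pos by (simp add: sech_def cosh_def c_def exp_minus field_simps power2_eq_square)
  also have "\<dots> = ((c\<^sup>2 + 1)\<^sup>2 - (c\<^sup>2 - 1)\<^sup>2) / (c\<^sup>2 + 1)\<^sup>2"
    by (simp add: power2_eq_square algebra_simps)
  also have "\<dots> = 1 - (c\<^sup>2 - 1)\<^sup>2 / (c\<^sup>2 + 1)\<^sup>2"
    using den by (simp add: diff_divide_distrib)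
  also have "\<dots> = 1 - t\<^sup>2"
    by (simp only: t_def power_divide)
  finally have sech_eq: "(sech (I / 2))\<^sup>2 = 1 - t\<^sup>2" .
  have "\<rho> * (c\<^sup>2 + 1) \<le> c\<^sup>2 - 1"
    using ratio unfolding exp_I by (simp add: algebra_simps)
  then have "\<rho> \<le> t"
    unfolding t_def using c_pos by (simp add: field_simps add_pos_pos)
  then have "\<rho>\<^sup>2 \<le> t\<^sup>2"
    using \<open>\<rho> \<ge> 0\<close> by (intro power_mono) auto
  then show ?thesis
    using sech_eq by simp
qed

lemma inverse_sqrt_twice_differentiable:
  fixes k k' k'' :: "real \<Rightarrow> real"
  assumes pos: "\<And>x. k x > 0"
    and d1: "\<And>x. (k has_real_derivative k' x) (at x)"
    and d2: "\<And>x. (k' has_real_derivative k'' x) (at x)"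
    and cont: "continuous_on UNIV k''"
  obtains w1 w2 where "\<And>x. ((\<lambda>x. 1 / sqrt (k x)) has_real_derivative w1 x) (at x)"
    and "\<And>x. (w1 has_real_derivative w2 x) (at x)" and "continuous_on UNIV w2"
proof -
  define \<sigma> where "\<sigma> = (\<lambda>x. sqrt (k x))"
  define \<sigma>1 where "\<sigma>1 = (\<lambda>x. k' x / (2 * \<sigma> x))"
  define \<sigma>2 where "\<sigma>2 = (\<lambda>x. (k'' x - 2 * (\<sigma>1 x)\<^sup>2) / (2 * \<sigma> x))"
  define w1 where "w1 = (\<lambda>x. - \<sigma>1 x / (\<sigma> x * \<sigma> x))"
  define w2 where "w2 = (\<lambda>x. (2 * (\<sigma>1 x)\<^sup>2 - \<sigma> x * \<sigma>2 x) / \<sigma> x ^ 3)"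
  have \<sigma>_pos: "\<sigma> x > 0" for x
    using pos[of x] by (simp add: \<sigma>_def)
  have \<sigma>_deriv: "(\<sigma> has_real_derivative \<sigma>1 x) (at x)" for x
    unfolding \<sigma>_def \<sigma>1_def using d1[of x] pos[of x]
    by (auto intro!: derivative_eq_intros simp: divide_simps)
  have \<sigma>1_deriv: "(\<sigma>1 has_real_derivative \<sigma>2 x) (at x)" for x
  proof -
    have "((\<lambda>x. k' x / (2 * \<sigma> x)) has_real_derivative
        (k'' x * (2 * \<sigma> x) - k' x * (2 * \<sigma>1 x)) / (2 * \<sigma> x * (2 * \<sigma> x))) (at x)"
      using \<sigma>_pos[of x] by (intro DERIV_divide d2 DERIV_cmult \<sigma>_deriv) auto
    then have "(\<sigma>1 has_real_derivative
        (k'' x * (2 * \<sigma> x) - k' x * (2 * \<sigma>1 x)) / (2 * \<sigma> x * (2 * \<sigma> x))) (at x)"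
      unfolding \<sigma>1_def[symmetric] .
    moreover have "(k'' x * (2 * \<sigma> x) - k' x * (2 * \<sigma>1 x)) / (2 * \<sigma> x * (2 * \<sigma> x)) = \<sigma>2 x"
    proof -
      have "k' x = 2 * \<sigma> x * \<sigma>1 x"
        using \<sigma>_pos[of x] by (simp add: \<sigma>1_def)
      then show ?thesis
        using \<sigma>_pos[of x] by (simp add: \<sigma>2_def field_simps power2_eq_square)
    qed
    ultimately show ?thesis
      by simp
  qed
  show ?thesis
  proof
    show "((\<lambda>x. 1 / sqrt (k x)) has_real_derivative w1 x) (at x)" for x
    proof -
      have "((\<lambda>x. 1 / \<sigma> x) has_real_derivative (0 * \<sigma> x - 1 * \<sigma>1 x) / (\<sigma> x * \<sigma> x)) (at x)"
        using \<sigma>_pos[of x] by (intro DERIV_divide DERIV_const \<sigma>_deriv) auto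
      then show ?thesis
        by (simp add: w1_def \<sigma>_def)
    qed
    show "(w1 has_real_derivative w2 x) (at x)" for x
    proof -
      have "(w1 has_real_derivative (- \<sigma>2 x * (\<sigma> x * \<sigma> x) - - \<sigma>1 x * (\<sigma>1 x * \<sigma> x + \<sigma>1 x * \<sigma> x))
          / (\<sigma> x * \<sigma> x * (\<sigma> x * \<sigma> x))) (at x)"
        unfolding w1_def[abs_def] using \<sigma>_pos[of x]
        by (intro DERIV_divide DERIV_minus DERIV_mult \<sigma>_deriv \<sigma>1_deriv) auto
      moreover have "(- \<sigma>2 x * (\<sigma> x * \<sigma> x) - - \<sigma>1 x * (\<sigma>1 x * \<sigma> x + \<sigma>1 x * \<sigma> x))
          / (\<sigma> x * \<sigma> x * (\<sigma> x * \<sigma> x)) = w2 x"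
        using \<sigma>_pos[of x] by (simp add: w2_def field_simps power2_eq_square power3_eq_cube)
      ultimately show ?thesis
        by simp
    qed
    have "continuous_on UNIV \<sigma>" "continuous_on UNIV \<sigma>1"
      using \<sigma>_deriv \<sigma>1_deriv by (auto intro!: continuous_at_imp_continuous_on DERIV_isCont)
    then show "continuous_on UNIV w2"
      unfolding w2_def \<sigma>2_def using \<sigma>_pos
      by (intro continuous_intros cont) (auto simp: less_imp_neq[symmetric])
  qed
qed

lemma liouville_transform:
  fixes w w1 w2 q :: "real \<Rightarrow> real" and u u' :: "real \<Rightarrow> complex"
  assumes w_pos: "w x > 0"
    and w_deriv: "(w has_real_derivative w1 x) (at x)"
    and w1_deriv: "(w1 has_real_derivative w2 x) (at x)"
    and u_deriv: "(u has_vector_derivative u' x) (at x)"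
    and u'_deriv: "(u' has_vector_derivative - of_real (q x) * u x) (at x)"
  shows "((\<lambda>x. of_real (1 / w x) * u x) has_vector_derivative
            of_real (1 / (w x)\<^sup>2) * (of_real (w x) * u' x - of_real (w1 x) * u x)) (at x)"
    and "((\<lambda>x. of_real (w x) * u' x - of_real (w1 x) * u x) has_vector_derivative
            - of_real (q x * (w x)\<^sup>2 + w x * w2 x) * (of_real (1 / w x) * u x)) (at x)"
proof -
  have "((\<lambda>x. 1 / w x) has_real_derivative - w1 x / (w x)\<^sup>2) (at x)"
    using w_pos by (auto intro!: derivative_eq_intros w_deriv simp: power2_eq_square)
  then have cinv: "((\<lambda>x. complex_of_real (1 / w x)) has_vector_derivative of_real (- w1 x / (w x)\<^sup>2)) (at x)"
    using has_vector_derivative_of_real has_real_derivative_iff_has_vector_derivative by blast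
  show "((\<lambda>x. of_real (1 / w x) * u x) has_vector_derivative
            of_real (1 / (w x)\<^sup>2) * (of_real (w x) * u' x - of_real (w1 x) * u x)) (at x)"
    using has_vector_derivative_mult[OF cinv u_deriv] w_pos
    by (simp add: field_simps power2_eq_square)
  show "((\<lambda>x. of_real (w x) * u' x - of_real (w1 x) * u x) has_vector_derivative
            - of_real (q x * (w x)\<^sup>2 + w x * w2 x) * (of_real (1 / w x) * u x)) (at x)"
    using w_pos
    by (auto intro!: derivative_eq_intros u_deriv u'_deriv w_deriv w1_deriv simp: field_simps power2_eq_square)
qed

(* The first-order system p' = k P, P' = -(k + V) p, obtained from the Liouville
   transformation with w = 1 / sqrt k; the perturbation is V = w w''. *)
locale liouville_system =
  fixes k V :: "real \<Rightarrow> real" and p P :: "real \<Rightarrow> complex"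
  assumes p_deriv: "\<And>x. (p has_vector_derivative of_real (k x) * P x) (at x)"
    and P_deriv: "\<And>x. (P has_vector_derivative - of_real (k x + V x) * p x) (at x)"
begin

(* Energy and flux of a solution.  In terms of the original wave function the flux is
   4 Im (conj u * u'), the conserved probability current. *)
definition energy :: "real \<Rightarrow> real" where
  "energy x = 2 * ((cmod (p x))\<^sup>2 + (cmod (P x))\<^sup>2)"

definition flux :: "real \<Rightarrow> real" where
  "flux x = 4 * Im (cnj (p x) * P x)"

definition current :: real where
  "current = flux 0"

lemma energy_nonneg: "energy x \<ge> 0"
  by (simp add: energy_def)

lemma energy_deriv: "(energy has_real_derivative - 4 * V x * Re (cnj (p x) * P x)) (at x)"
proof -
  have "(energy has_real_derivative 2 * (2 * Re (cnj (p x) * (of_real (k x) * P x))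
      + 2 * Re (cnj (P x) * (- of_real (k x + V x) * p x)))) (at x)"
    unfolding energy_def[abs_def]
    by (intro DERIV_cmult DERIV_add has_real_derivative_norm_square p_deriv P_deriv)
  then show ?thesis
    by (simp add: algebra_simps)
qed

lemma flux_eq_current: "flux x = current"
proof -
  have "((\<lambda>x. cnj (p x) * P x) has_vector_derivative
      cnj (p x) * (- of_real (k x + V x) * p x) + cnj (of_real (k x) * P x) * P x) (at x)" for x
    by (intro has_vector_derivative_mult has_vector_derivative_cnj p_deriv P_deriv)
  then have "((\<lambda>x. Im (cnj (p x) * P x)) has_vector_derivative
      Im (cnj (p x) * (- of_real (k x + V x) * p x) + cnj (of_real (k x) * P x) * P x)) (at x)" for x
    by (rule bounded_linear.has_vector_derivative[OF bounded_linear_Im])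
  then have "((\<lambda>x. Im (cnj (p x) * P x)) has_real_derivative 0) (at x)" for x
    by (simp add: has_real_derivative_iff_has_vector_derivative algebra_simps)
  then have "(flux has_real_derivative 4 * 0) (at x)" for x
    unfolding flux_def[abs_def] by (rule DERIV_cmult)
  then show ?thesis
    unfolding current_def by (intro DERIV_isconst_all) auto
qed

(* Since |conj p * P| \<le> (|p|\<^sup>2 + |P|\<^sup>2) / 2, the real part of conj p * P is controlled
   by the excess of the energy over the flux. *)
lemma energy_flux_bound: "4 * \<bar>Re (cnj (p x) * P x)\<bar> \<le> sqrt ((energy x)\<^sup>2 - current\<^sup>2)"
proof -
  define z where "z = cnj (p x) * P x"
  have "(cmod z)\<^sup>2 = (Re z)\<^sup>2 + (Im z)\<^sup>2"
    by (rule cmod_power2)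
  moreover have "cmod z = cmod (p x) * cmod (P x)"
    by (simp add: z_def norm_mult)
  moreover have AM_GM: "4 * (cmod (p x) * cmod (P x))\<^sup>2 \<le> ((cmod (p x))\<^sup>2 + (cmod (P x))\<^sup>2)\<^sup>2"
    using zero_le_power2[of "(cmod (p x))\<^sup>2 - (cmod (P x))\<^sup>2"]
    by (simp add: power2_eq_square algebra_simps)
  moreover have "flux x = 4 * Im z"
    by (simp add: flux_def z_def)
  ultimately have "(4 * \<bar>Re z\<bar>)\<^sup>2 = 4 * (2 * (cmod (p x) * cmod (P x)))\<^sup>2 - (flux x)\<^sup>2"
    by (simp add: power_mult_distrib)
  also have "\<dots> \<le> (energy x)\<^sup>2 - (flux x)\<^sup>2"
    using AM_GM unfolding energy_def power_mult_distrib by (simp add: mult.commute)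
  finally have "(4 * \<bar>Re z\<bar>)\<^sup>2 \<le> (energy x)\<^sup>2 - (flux x)\<^sup>2" .
  then show ?thesis
    unfolding z_def flux_eq_current by (rule real_le_rsqrt)
qed

lemma current_le_energy: "current\<^sup>2 \<le> (energy x)\<^sup>2"
  using energy_flux_bound[of x] real_sqrt_ge_zero[of "(energy x)\<^sup>2 - current\<^sup>2"]
  by (smt (verit) real_sqrt_lt_0_iff abs_ge_zero)

(* As \<epsilon> \<rightarrow> 0 it tends to energy + sqrt (energy\<^sup>2 - current\<^sup>2),
   which measures the amount of reflection; the regularisation keeps it differentiable. *)
definition gap :: "real \<Rightarrow> real \<Rightarrow> real" where
  "gap \<epsilon> x = energy x + sqrt ((energy x)\<^sup>2 - current\<^sup>2 + \<epsilon>)"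

lemma gap_nonneg: "\<epsilon> \<ge> 0 \<Longrightarrow> gap \<epsilon> x \<ge> 0"
  using current_le_energy[of x] energy_nonneg[of x] by (simp add: gap_def)

lemma gap_growth:
  assumes "\<epsilon> > 0"
  shows "\<exists>d. (gap \<epsilon> has_real_derivative d) (at x) \<and> \<bar>d\<bar> \<le> \<bar>V x\<bar> * gap \<epsilon> x"
proof -
  define R where "R = Re (cnj (p x) * P x)"
  define root where "root = sqrt ((energy x)\<^sup>2 - current\<^sup>2 + \<epsilon>)"
  have radicand_pos: "(energy x)\<^sup>2 - current\<^sup>2 + \<epsilon> > 0"
    using current_le_energy[of x] \<open>\<epsilon> > 0\<close> by simp
  then have root_pos: "root > 0"
    by (simp add: root_def)
  have "(gap \<epsilon> has_real_derivative - 4 * V x * R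
      + inverse root / 2 * (2 * energy x * (- 4 * V x * R))) (at x)"
    unfolding gap_def[abs_def] R_def root_def using radicand_pos
    by (auto intro!: derivative_eq_intros energy_deriv)
  moreover have "- 4 * V x * R + inverse root / 2 * (2 * energy x * (- 4 * V x * R))
      = - 4 * V x * R * (1 + energy x / root)"
    using root_pos by (simp add: field_simps)
  moreover have "\<bar>- 4 * V x * R * (1 + energy x / root)\<bar> \<le> \<bar>V x\<bar> * gap \<epsilon> x"
  proof -
    have "4 * \<bar>R\<bar> \<le> root"
      using energy_flux_bound[of x] \<open>\<epsilon> > 0\<close> unfolding R_def root_def
      by (smt (verit) real_sqrt_le_mono)
    then have "\<bar>V x\<bar> * (4 * \<bar>R\<bar>) * (1 + energy x / root) \<le> \<bar>V x\<bar> * root * (1 + energy x / root)"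
      using root_pos energy_nonneg[of x] by (intro mult_right_mono mult_left_mono) auto
    also have "\<dots> = \<bar>V x\<bar> * gap \<epsilon> x"
      using root_pos by (simp add: gap_def root_def field_simps)
    moreover have "\<bar>- 4 * V x * R * (1 + energy x / root)\<bar> = \<bar>V x\<bar> * (4 * \<bar>R\<bar>) * (1 + energy x / root)"
      using root_pos energy_nonneg[of x] by (simp add: abs_mult)
    ultimately show ?thesis
      by simp
  qed
  ultimately show ?thesis
    by auto
qed

end

locale scattering_system = liouville_system +
  fixes \<kappa> I a b :: real
  assumes \<kappa>_pos: "\<kappa> > 0"
    and k_cont: "continuous_on UNIV k"
    and V_cont: "continuous_on UNIV V"
    and I_nonneg: "0 \<le> I"
    and V_total: "(\<integral>\<^sup>+ x. ennreal \<bar>V x\<bar> \<partial>lborel) \<le> ennreal I"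
    and k_left: "set_integrable lborel {..a} (\<lambda>x. k x - \<kappa>)"
    and k_right: "set_integrable lborel {b..} (\<lambda>x. k x - \<kappa>)"
begin

lemma gap_ratio:
  assumes "\<epsilon> > 0" and "x \<le> y"
  shows "gap \<epsilon> x \<le> gap \<epsilon> y * exp I" and "gap \<epsilon> y \<le> gap \<epsilon> x * exp I"
proof -
  obtain F where F_deriv: "\<And>x. (F has_real_derivative \<bar>V x\<bar>) (at x)"
    and increment: "\<And>x y. x \<le> y \<Longrightarrow> F y - F x \<le> I"
    using bounded_antiderivative[OF continuous_on_rabs[OF V_cont] abs_ge_zero I_nonneg V_total] by blast
  note gronwall = gronwall_two_sided[OF gap_growth[OF \<open>\<epsilon> > 0\<close>] F_deriv gap_nonneg
      \<open>x \<le> y\<close> increment[OF \<open>x \<le> y\<close>]]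
  show "gap \<epsilon> x \<le> gap \<epsilon> y * exp I" and "gap \<epsilon> y \<le> gap \<epsilon> x * exp I"
    using gronwall \<open>\<epsilon> > 0\<close> by auto
qed

(* Bounded energy, hence bounded solutions. *)
lemma solution_bounded: "\<exists>M. \<forall>x. cmod (p x) \<le> M \<and> cmod (P x) \<le> M"
proof -
  define M where "M = gap 1 0 * exp I"
  have "energy x \<le> M" for x
  proof -
    have "energy x \<le> gap 1 x"
      using current_le_energy[of x] by (simp add: gap_def)
    also have "\<dots> \<le> M"
      unfolding M_def using gap_ratio[of 1 x 0] gap_ratio[of 1 0 x] by (cases "x \<le> 0") auto
    finally show ?thesis .
  qed
  then have "(cmod (p x))\<^sup>2 \<le> M \<and> (cmod (P x))\<^sup>2 \<le> M" for x
    by (smt (verit) energy_def zero_le_power2)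
  then show ?thesis
    by (meson real_le_rsqrt)
qed

(* Amplitudes of the two plane waves: amplitude 1 is the coefficient of exp (-\<i>\<kappa>x)
   (the left-moving wave) and amplitude (-1) that of exp (\<i>\<kappa>x). *)
definition amplitude :: "real \<Rightarrow> real \<Rightarrow> complex" where
  "amplitude s x = (p x + of_real s * \<i> * P x) * exp (of_real s * \<i> * of_real (\<kappa> * x))"

lemma amplitude_deriv:
  assumes "s = 1 \<or> s = -1"
  shows "(amplitude s has_vector_derivative
      (of_real (k x - \<kappa>) * P x - of_real s * \<i> * of_real (k x - \<kappa> + V x) * p x)
        * exp (of_real s * \<i> * of_real (\<kappa> * x))) (at x)"
proof -
  have "(amplitude s has_vector_derivative
      (p x + of_real s * \<i> * P x) * (of_real s * \<i> * of_real \<kappa> * exp (of_real s * \<i> * of_real (\<kappa> * x)))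
      + (of_real (k x) * P x + of_real s * \<i> * (- of_real (k x + V x) * p x))
        * exp (of_real s * \<i> * of_real (\<kappa> * x))) (at x)"
    unfolding amplitude_def[abs_def]
    by (intro has_vector_derivative_mult has_vector_derivative_add has_vector_derivative_mult_right
        p_deriv P_deriv has_vector_derivative_exp_linear)
  then show ?thesis
    using assms by (elim disjE) (simp_all add: algebra_simps)
qed

lemma V_integrable: "integrable lborel V"
proof (rule integrableI_bounded)
  show "V \<in> borel_measurable lborel"
    using borel_measurable_continuous_onI[OF V_cont] by simp
  show "(\<integral>\<^sup>+ x. ennreal (norm (V x)) \<partial>lborel) < \<infinity>"
    using V_total by (simp add: le_less_trans)
qed

(* The amplitudes converge at both ends, since their derivatives are dominated by a
   multiple of 2 |k - \<kappa>| + |V|. *)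
lemma amplitude_converges:
  assumes s: "s = 1 \<or> s = -1"
  shows "\<exists>L. (amplitude s \<longlongrightarrow> L) at_top" and "\<exists>L. (amplitude s \<longlongrightarrow> L) at_bot"
proof -
  obtain M where M: "\<And>x. cmod (p x) \<le> M" "\<And>x. cmod (P x) \<le> M"
    using solution_bounded by blast
  define A' where "A' = (\<lambda>x. (of_real (k x - \<kappa>) * P x - of_real s * \<i> * of_real (k x - \<kappa> + V x) * p x)
      * exp (of_real s * \<i> * of_real (\<kappa> * x)))"
  have deriv: "(amplitude s has_vector_derivative A' x) (at x)" for x
    unfolding A'_def using amplitude_deriv[OF s] .
  have "continuous_on UNIV p" "continuous_on UNIV P"
    using p_deriv P_deriv
    by (auto intro!: continuous_at_imp_continuous_on has_vector_derivative_continuous)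
  then have A'_cont: "continuous_on UNIV A'"
    unfolding A'_def by (intro continuous_intros k_cont V_cont)
  have A'_bound: "cmod (A' x) \<le> M * (2 * \<bar>k x - \<kappa>\<bar> + \<bar>V x\<bar>)" for x
  proof -
    have "cmod (A' x) \<le> \<bar>k x - \<kappa>\<bar> * cmod (P x) + \<bar>k x - \<kappa> + V x\<bar> * cmod (p x)"
      unfolding A'_def using s
      by (auto simp: norm_mult simp del: of_real_diff of_real_add intro!: order.trans[OF norm_triangle_ineq4])
    also have "\<dots> \<le> \<bar>k x - \<kappa>\<bar> * M + (\<bar>k x - \<kappa>\<bar> + \<bar>V x\<bar>) * M"
      by (intro add_mono mult_mono M) auto
    finally show ?thesis
      by (simp add: algebra_simps)
  qed
  have A'_integrable: "set_integrable lborel A A'"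
    if A: "set_integrable lborel A (\<lambda>x. k x - \<kappa>)" "A \<in> sets lborel" for A
  proof (rule set_integrable_continuous_bound[OF _ A(2) A'_cont A'_bound])
    have "set_integrable lborel A V"
      unfolding set_integrable_def using A(2) V_integrable by (rule integrable_mult_indicator)
    then show "set_integrable lborel A (\<lambda>x. M * (2 * \<bar>k x - \<kappa>\<bar> + \<bar>V x\<bar>))"
      using A(1) by (intro set_integrable_mult_right set_integral_add(1) set_integrable_abs) auto
  qed
  show "\<exists>L. (amplitude s \<longlongrightarrow> L) at_top"
    by (rule tendsto_at_top_of_integrable_derivative[OF deriv A'_integrable[OF k_right]]) simp
  show "\<exists>L. (amplitude s \<longlongrightarrow> L) at_bot"
    by (rule tendsto_at_bot_of_integrable_derivative[OF deriv A'_integrable[OF k_left]]) simp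
qed

lemma norm_amplitude: "cmod (amplitude s x) = cmod (p x + of_real s * \<i> * P x)"
  by (simp add: amplitude_def norm_mult)

lemma energy_amplitudes: "energy x = (cmod (amplitude (-1) x))\<^sup>2 + (cmod (amplitude 1 x))\<^sup>2"
  and flux_amplitudes: "flux x = (cmod (amplitude (-1) x))\<^sup>2 - (cmod (amplitude 1 x))\<^sup>2"
  unfolding norm_amplitude energy_def flux_def cmod_power2
  by (simp_all add: power2_eq_square algebra_simps)

lemma solution_amplitudes:
  "p x = (amplitude (-1) x * exp (\<i> * of_real (\<kappa> * x)) + amplitude 1 x * exp (- \<i> * of_real (\<kappa> * x))) / 2"
proof -
  have "exp (- \<i> * of_real (\<kappa> * x)) * exp (\<i> * of_real (\<kappa> * x)) = 1"
    by (simp add: exp_add[symmetric])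
  then show ?thesis
    by (simp add: amplitude_def algebra_simps)
qed

lemma amplitude_limits:
  assumes F: "F = at_top \<or> F = at_bot"
    and right: "(amplitude (-1) \<longlongrightarrow> A') F" and left: "(amplitude 1 \<longlongrightarrow> B') F"
    and close: "((\<lambda>x. p x - (A * exp (\<i> * of_real (\<kappa> * x)) + B * exp (- \<i> * of_real (\<kappa> * x)))) \<longlongrightarrow> 0) F"
  shows "A' = 2 * A" and "B' = 2 * B"
proof -
  define e where "e = (\<lambda>s x. exp (of_real s * \<i> * of_real (\<kappa> * x)) :: complex)"
  have unit: "cmod (e s x) = 1" for s x
    by (simp add: e_def)
  have "((\<lambda>x. (p x - (A * e 1 x + B * e (-1) x)) - (amplitude (-1) x - A') / 2 * e 1 x
      - (amplitude 1 x - B') / 2 * e (-1) x) \<longlongrightarrow> 0 - 0 - 0) F"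
  proof (intro tendsto_diff)
    show "((\<lambda>x. p x - (A * e 1 x + B * e (-1) x)) \<longlongrightarrow> 0) F"
      using close by (simp add: e_def)
    show "((\<lambda>x. (amplitude (-1) x - A') / 2 * e 1 x) \<longlongrightarrow> 0) F"
      by (rule tendsto_0_le[where K = "1 / 2", OF LIM_zero[OF right]])
         (simp add: norm_mult unit)
    show "((\<lambda>x. (amplitude 1 x - B') / 2 * e (-1) x) \<longlongrightarrow> 0) F"
      by (rule tendsto_0_le[where K = "1 / 2", OF LIM_zero[OF left]])
         (simp add: norm_mult unit)
  qed
  moreover have "(p x - (A * e 1 x + B * e (-1) x)) - (amplitude (-1) x - A') / 2 * e 1 x
      - (amplitude 1 x - B') / 2 * e (-1) x
      = (A' / 2 - A) * exp (\<i> * of_real (\<kappa> * x)) + (B' / 2 - B) * exp (- \<i> * of_real (\<kappa> * x))" for x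
    by (subst solution_amplitudes) (simp add: e_def field_simps)
  ultimately have "((\<lambda>x. (A' / 2 - A) * exp (\<i> * of_real (\<kappa> * x))
      + (B' / 2 - B) * exp (- \<i> * of_real (\<kappa> * x))) \<longlongrightarrow> 0) F"
    by simp
  then have "A' / 2 - A = 0 \<and> B' / 2 - B = 0"
    using F exp_combination_tendsto_zero_at_top[OF \<kappa>_pos] exp_combination_tendsto_zero_at_bot[OF \<kappa>_pos]
    by blast
  then show "A' = 2 * A" and "B' = 2 * B"
    by simp_all
qed

(* Scattering identities for a solution behaving like sqrt \<kappa> (e^(i\<kappa>x) + r e^(-i\<kappa>x)) at -\<infinity>
   and like sqrt \<kappa> \<tau> e^(i\<kappa>x) at +\<infinity>: flux conservation gives |\<tau>|\<^sup>2 = 1 - |r|\<^sup>2, and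
   comparing the gap function at both ends gives 1 + |r| \<le> (1 - |r|) exp I. *)
lemma scattering_bound:
  assumes left: "((\<lambda>x. p x - of_real (sqrt \<kappa>) * (exp (\<i> * of_real (\<kappa> * x))
      + r * exp (- \<i> * of_real (\<kappa> * x)))) \<longlongrightarrow> 0) at_bot"
    and right: "((\<lambda>x. p x - of_real (sqrt \<kappa>) * (\<tau> * exp (\<i> * of_real (\<kappa> * x)))) \<longlongrightarrow> 0) at_top"
  shows "(cmod \<tau>)\<^sup>2 = 1 - (cmod r)\<^sup>2" and "1 + cmod r \<le> (1 - cmod r) * exp I"
proof -
  define \<rho> where "\<rho> = cmod r"
  obtain R_top L_top R_bot L_bot where
    lim_R_top: "(amplitude (-1) \<longlongrightarrow> R_top) at_top" and lim_L_top: "(amplitude 1 \<longlongrightarrow> L_top) at_top"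
    and lim_R_bot: "(amplitude (-1) \<longlongrightarrow> R_bot) at_bot" and lim_L_bot: "(amplitude 1 \<longlongrightarrow> L_bot) at_bot"
    using amplitude_converges[of "-1"] amplitude_converges[of 1] by auto
  have "((\<lambda>x. p x - (of_real (sqrt \<kappa>) * \<tau> * exp (\<i> * of_real (\<kappa> * x))
      + 0 * exp (- \<i> * of_real (\<kappa> * x)))) \<longlongrightarrow> 0) at_top"
    using right by (simp add: mult.assoc)
  then have "R_top = 2 * (of_real (sqrt \<kappa>) * \<tau>)" "L_top = 2 * 0"
    using amplitude_limits[OF disjI1[OF refl] lim_R_top lim_L_top] by blast+
  then have energy_top: "(energy \<longlongrightarrow> 4 * \<kappa> * (cmod \<tau>)\<^sup>2) at_top"
    and flux_top: "(flux \<longlongrightarrow> 4 * \<kappa> * (cmod \<tau>)\<^sup>2) at_top"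
    unfolding energy_amplitudes[abs_def] flux_amplitudes[abs_def] using \<kappa>_pos
    by (auto intro!: tendsto_eq_intros lim_R_top lim_L_top simp: norm_mult power_mult_distrib)
  have "((\<lambda>x. p x - (of_real (sqrt \<kappa>) * exp (\<i> * of_real (\<kappa> * x))
      + of_real (sqrt \<kappa>) * r * exp (- \<i> * of_real (\<kappa> * x)))) \<longlongrightarrow> 0) at_bot"
    using left by (simp add: algebra_simps)
  then have "R_bot = 2 * of_real (sqrt \<kappa>)" "L_bot = 2 * (of_real (sqrt \<kappa>) * r)"
    using amplitude_limits[OF disjI2[OF refl] lim_R_bot lim_L_bot] by blast+
  then have energy_bot: "(energy \<longlongrightarrow> 4 * \<kappa> * (1 + \<rho>\<^sup>2)) at_bot"
    and flux_bot: "(flux \<longlongrightarrow> 4 * \<kappa> * (1 - \<rho>\<^sup>2)) at_bot"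
    unfolding energy_amplitudes[abs_def] flux_amplitudes[abs_def] \<rho>_def using \<kappa>_pos
    by (auto intro!: tendsto_eq_intros lim_R_bot lim_L_bot simp: norm_mult algebra_simps)
  have flux_const: "flux = (\<lambda>_. current)"
    using flux_eq_current by auto
  have current_top: "current = 4 * \<kappa> * (cmod \<tau>)\<^sup>2"
    using flux_top unfolding flux_const by (simp add: tendsto_const_iff)
  have current_bot: "current = 4 * \<kappa> * (1 - \<rho>\<^sup>2)"
    using flux_bot unfolding flux_const by (simp add: tendsto_const_iff)
  show "(cmod \<tau>)\<^sup>2 = 1 - (cmod r)\<^sup>2"
    using current_top current_bot \<kappa>_pos by (simp add: \<rho>_def)
  define E where "E = 4 * \<kappa> * (1 + \<rho>\<^sup>2)"
  have gap_limits: "E + sqrt (E\<^sup>2 - current\<^sup>2 + \<epsilon>) \<le> (current + sqrt \<epsilon>) * exp I" if "\<epsilon> > 0" for \<epsilon>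
  proof (rule limit_at_bot_le_limit_at_top[of "gap \<epsilon>"])
    show "(gap \<epsilon> \<longlongrightarrow> E + sqrt (E\<^sup>2 - current\<^sup>2 + \<epsilon>)) at_bot"
      unfolding gap_def[abs_def] E_def by (intro tendsto_intros energy_bot)
    show "(gap \<epsilon> \<longlongrightarrow> current + sqrt \<epsilon>) at_top"
      unfolding gap_def[abs_def] current_top
      by (auto intro!: tendsto_eq_intros energy_top)
    show "gap \<epsilon> x \<le> gap \<epsilon> y * exp I" if "x \<le> y" for x y
      using gap_ratio(1)[OF \<open>\<epsilon> > 0\<close> that] .
  qed
  have "E\<^sup>2 - current\<^sup>2 = (8 * \<kappa> * \<rho>)\<^sup>2"
    unfolding E_def current_bot by (simp add: power2_eq_square algebra_simps)
  then have "sqrt (E\<^sup>2 - current\<^sup>2) = 8 * \<kappa> * \<rho>"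
    using \<kappa>_pos by (simp add: \<rho>_def)
  then have regularised: "4 * \<kappa> * (1 + \<rho>)\<^sup>2 \<le> (current + sqrt \<epsilon>) * exp I" if "\<epsilon> > 0" for \<epsilon>
    using gap_limits[OF that] real_sqrt_le_mono[of "E\<^sup>2 - current\<^sup>2" "E\<^sup>2 - current\<^sup>2 + \<epsilon>"] that
    by (simp add: E_def power2_eq_square algebra_simps)
  have "((\<lambda>\<epsilon>. (current + sqrt \<epsilon>) * exp I) \<longlongrightarrow> (current + sqrt 0) * exp I) (at_right 0)"
    by (intro tendsto_intros)
  moreover have "eventually (\<lambda>\<epsilon>. 4 * \<kappa> * (1 + \<rho>)\<^sup>2 \<le> (current + sqrt \<epsilon>) * exp I) (at_right 0)"
    using eventually_at_right_less[of "0::real"] by (rule eventually_mono) (rule regularised)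
  ultimately have "4 * \<kappa> * (1 + \<rho>)\<^sup>2 \<le> (current + sqrt 0) * exp I"
    by (rule tendsto_le[OF trivial_limit_at_right_real _ tendsto_const])
  then have "(1 + \<rho>) * (4 * \<kappa> * (1 + \<rho>)) \<le> ((1 - \<rho>) * exp I) * (4 * \<kappa> * (1 + \<rho>))"
    unfolding current_bot by (simp add: power2_eq_square algebra_simps)
  moreover have "4 * \<kappa> * (1 + \<rho>) > 0"
    using \<kappa>_pos by (simp add: \<rho>_def add_pos_nonneg)
  ultimately have "1 + \<rho> \<le> (1 - \<rho>) * exp I"
    by (rule mult_right_le_imp_le)
  then show "1 + cmod r \<le> (1 - cmod r) * exp I"
    by (simp add: \<rho>_def)
qed

end

(* The Schroedinger equation u'' + q u = 0 with q > 0 fits the scattering setting: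
   with k = sqrt q and w = 1 / sqrt k, the Liouville transform p = u / w, P = w u' - w' u
   solves the first-order system with perturbation V = w w''. *)
lemma schroedinger_scattering_system:
  fixes q w k' k'' :: "real \<Rightarrow> real" and u u' :: "real \<Rightarrow> complex" and \<kappa> I a b :: real
  assumes w_def: "w = (\<lambda>x. 1 / sqrt (sqrt (q x)))"
    and "\<kappa> > 0" and q_pos: "\<And>x. q x > 0"
    and k_d1: "\<And>x. ((\<lambda>y. sqrt (q y)) has_real_derivative k' x) (at x)"
    and k_d2: "\<And>x. (k' has_real_derivative k'' x) (at x)" and k_C2: "continuous_on UNIV k''"
    and u_d1: "\<And>x. (u has_vector_derivative u' x) (at x)"
    and u_ode: "\<And>x. (u' has_vector_derivative (- complex_of_real (q x) * u x)) (at x)"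
    and left: "set_integrable lborel {..a} (\<lambda>x. q x - \<kappa>\<^sup>2)"
    and right: "set_integrable lborel {b..} (\<lambda>x. q x - \<kappa>\<^sup>2)"
    and "0 \<le> I" and V_total: "(\<integral>\<^sup>+ x. ennreal \<bar>w x * deriv (deriv w) x\<bar> \<partial>lborel) \<le> ennreal I"
  shows "\<exists>P. scattering_system (\<lambda>x. sqrt (q x)) (\<lambda>x. w x * deriv (deriv w) x)
      (\<lambda>x. of_real (1 / w x) * u x) P \<kappa> I a b"
proof -
  define k where "k = (\<lambda>x. sqrt (q x))"
  have k_pos: "k x > 0" for x
    using q_pos[of x] by (simp add: k_def)
  have w_eq: "w = (\<lambda>x. 1 / sqrt (k x))"
    by (simp add: w_def k_def)
  have w_pos: "w x > 0" for x
    using k_pos[of x] by (simp add: w_eq)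
  obtain w1 w2 where w_deriv: "\<And>x. (w has_real_derivative w1 x) (at x)"
    and w1_deriv: "\<And>x. (w1 has_real_derivative w2 x) (at x)" and w2_cont: "continuous_on UNIV w2"
    using inverse_sqrt_twice_differentiable[OF k_pos k_d1[folded k_def] k_d2 k_C2] unfolding w_eq by blast
  have "deriv w = w1" "deriv w1 = w2"
    using w_deriv w1_deriv by (auto intro!: DERIV_imp_deriv)
  then have V_eq: "w x * deriv (deriv w) x = w x * w2 x" for x
    by simp
  have w_sq: "1 / (w x)\<^sup>2 = k x" "q x * (w x)\<^sup>2 = k x" for x
    using q_pos[of x] k_pos[of x] by (simp_all add: w_eq k_def power_divide real_div_sqrt)
  have k_cont: "continuous_on UNIV k"
    using k_d1 unfolding k_def by (auto intro!: continuous_at_imp_continuous_on DERIV_isCont)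
  have w_cont: "continuous_on UNIV w"
    using w_deriv by (auto intro!: continuous_at_imp_continuous_on DERIV_isCont)
  have "scattering_system k (\<lambda>x. w x * w2 x) (\<lambda>x. of_real (1 / w x) * u x)
      (\<lambda>x. of_real (w x) * u' x - of_real (w1 x) * u x) \<kappa> I a b"
  proof
    fix x
    note transform = liouville_transform[of w x w1 w2 u u' q, OF w_pos w_deriv w1_deriv u_d1 u_ode]
    show "((\<lambda>x. of_real (1 / w x) * u x) has_vector_derivative
        of_real (k x) * (of_real (w x) * u' x - of_real (w1 x) * u x)) (at x)"
      using transform(1) unfolding w_sq .
    show "((\<lambda>x. of_real (w x) * u' x - of_real (w1 x) * u x) has_vector_derivative
        - of_real (k x + w x * w2 x) * (of_real (1 / w x) * u x)) (at x)"
      using transform(2) unfolding w_sq .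
  next
    show "continuous_on UNIV (\<lambda>x. w x * w2 x)"
      by (intro continuous_intros w_cont w2_cont)
    show "(\<integral>\<^sup>+ x. ennreal \<bar>w x * w2 x\<bar> \<partial>lborel) \<le> ennreal I"
      using V_total by (simp only: V_eq)
    show "set_integrable lborel {..a} (\<lambda>x. k x - \<kappa>)" "set_integrable lborel {b..} (\<lambda>x. k x - \<kappa>)"
      using set_integrable_sqrt_deviation[OF q_pos \<open>\<kappa> > 0\<close> k_cont[unfolded k_def]] left right
      by (simp_all add: k_def)
  qed (use \<open>\<kappa> > 0\<close> \<open>0 \<le> I\<close> k_cont in auto)
  then show ?thesis
    unfolding V_eq k_def by blast
qed

(* The main theorem: the asymptotics of u transfer to p = u / w because 1 / w \<rightarrow> sqrt km
   at both ends, and the scattering bound then yields the sech\<^sup>2 estimate. *)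
theorem mainTheorem10:
  fixes q :: "real \<Rightarrow> real" and km kp :: real
    and k' k'' :: "real \<Rightarrow> real"
    and u u' :: "real \<Rightarrow> complex" and r \<tau> :: complex
  assumes km_pos: "km > 0" and kp_pos: "kp > 0"
    and lim_bot: "(q \<longlongrightarrow> km^2) at_bot"
    and lim_top: "(q \<longlongrightarrow> kp^2) at_top"
    and int_bot: "\<exists>a. set_integrable lborel {..a} (\<lambda>x. q x - km^2)"
    and int_top: "\<exists>b. set_integrable lborel {b..} (\<lambda>x. q x - kp^2)"
    and same: "kp = km"
    and q_pos: "\<And>x. q x > 0"
    and k_d1: "\<And>x. ((\<lambda>y. sqrt (q y)) has_real_derivative k' x) (at x)"
    and k_d2: "\<And>x. (k' has_real_derivative k'' x) (at x)"
    and k_C2: "continuous_on UNIV k''"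
    and u_d1: "\<And>x. (u has_vector_derivative u' x) (at x)"
    and u_ode: "\<And>x. (u' has_vector_derivative (- complex_of_real (q x) * u x)) (at x)"
    and u_bot: "((\<lambda>x. u x - (exp (\<i> * complex_of_real (km * x))
                          + r * exp (- \<i> * complex_of_real (km * x)))) \<longlongrightarrow> 0) at_bot"
    and u_top: "((\<lambda>x. u x - \<tau> * exp (\<i> * complex_of_real (kp * x))) \<longlongrightarrow> 0) at_top"
  shows "let w = (\<lambda>x. 1 / sqrt (sqrt (q x)));
             I = (\<integral>\<^sup>+ x. ennreal \<bar>w x * deriv (deriv w) x\<bar> \<partial>lborel)
         in I \<noteq> \<infinity> \<longrightarrow> transmission kp km \<tau> \<ge> (sech (enn2real I / 2))^2"
proof -
  define w where "w = (\<lambda>x. 1 / sqrt (sqrt (q x)))"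
  show ?thesis
    unfolding Let_def w_def[symmetric]
  proof
    assume finite: "(\<integral>\<^sup>+ x. ennreal \<bar>w x * deriv (deriv w) x\<bar> \<partial>lborel) \<noteq> \<infinity>"
    define I where "I = enn2real (\<integral>\<^sup>+ x. ennreal \<bar>w x * deriv (deriv w) x\<bar> \<partial>lborel)"
    obtain a b where left: "set_integrable lborel {..a} (\<lambda>x. q x - km\<^sup>2)"
      and right: "set_integrable lborel {b..} (\<lambda>x. q x - km\<^sup>2)"
      using int_bot int_top same by blast
    have I_nonneg: "0 \<le> I"
      by (simp add: I_def)
    have V_total: "(\<integral>\<^sup>+ x. ennreal \<bar>w x * deriv (deriv w) x\<bar> \<partial>lborel) \<le> ennreal I"
      using finite by (simp add: I_def less_top)
    obtain P where system: "scattering_system (\<lambda>x. sqrt (q x)) (\<lambda>x. w x * deriv (deriv w) x)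
        (\<lambda>x. of_real (1 / w x) * u x) P km I a b"
      using schroedinger_scattering_system[OF w_def km_pos q_pos k_d1 k_d2 k_C2 u_d1 u_ode
          left right I_nonneg V_total] by blast
    have scale_top: "((\<lambda>x. 1 / w x) \<longlongrightarrow> sqrt km) at_top"
      and scale_bot: "((\<lambda>x. 1 / w x) \<longlongrightarrow> sqrt km) at_bot"
      using tendsto_real_sqrt[OF tendsto_real_sqrt[OF lim_top]]
        tendsto_real_sqrt[OF tendsto_real_sqrt[OF lim_bot]] km_pos same by (simp_all add: w_def)
    have "((\<lambda>x. of_real (1 / w x) * u x - of_real (sqrt km) * (exp (\<i> * of_real (km * x))
        + r * exp (- \<i> * of_real (km * x)))) \<longlongrightarrow> 0) at_bot"
      by (rule tendsto_scaled_asymptotic[OF u_bot scale_bot, where M = "1 + cmod r"])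
         (auto intro!: order.trans[OF norm_triangle_ineq] simp: norm_mult)
    moreover have "((\<lambda>x. of_real (1 / w x) * u x - of_real (sqrt km) * (\<tau> * exp (\<i> * of_real (km * x))))
        \<longlongrightarrow> 0) at_top"
      using u_top[unfolded same]
      by (rule tendsto_scaled_asymptotic[OF _ scale_top, where M = "cmod \<tau>"]) (simp add: norm_mult)
    ultimately have "(cmod \<tau>)\<^sup>2 = 1 - (cmod r)\<^sup>2" and "1 + cmod r \<le> (1 - cmod r) * exp I"
      by (rule scattering_system.scattering_bound[OF system])+
    then show "(sech (I / 2))\<^sup>2 \<le> transmission kp km \<tau>"
      using sech_square_lower_bound[of "cmod r" I] km_pos by (simp add: transmission_def same)
  qed
qed

end
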